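(* Let $X_1,X_2,\dots$ be i.i.d. $N(\mu,\sigma^2)$ with $\mu\in\mathbb{R}$, $\sigma>0$. For $n\ge2$ let $S_n^2=(n-1)^{-1}\sum_{i=1}^n(X_i-\bar X_n)^2$ with $\bar X_n=n^{-1}\sum_{i=1}^nX_i$. Let $A>0$, $c>0$, $n^*=\sigma\sqrt{A/c}$, fix an integer $k\ge1$ and $0<\rho\le1$, let $m=m_0k+1$ for an integer $m_0\ge1$, and define $$T=\inf\{n\ge 0:\ m+kn\ge \rho S_{m+kn}\sqrt{A/c}\},\qquad N=\lfloor \rho^{-1}(m+kT)\rfloor+1,$$ where $\lfloor u\rfloor$ denotes the largest integer strictly smaller than $u$. Consider the limit operations $m_0\to\infty$, $m\to\infty$, $c=O(m^{-2r})$, $n^*=O(m^r)$ and $\limsup m/n^*<\rho$, with $r>1$ fixed. Then for any arbitrary $0<\varepsilon<1$, with some $\gamma\ge2$, under these limit operations, $$P_{\mu,\sigma}(N\le \varepsilon n^* )=O\big(n^{*\,-\gamma/(2r)}\big).$$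
   Context: $P_{\mu,\sigma}$ denotes probability under $N(\mu,\sigma^2)$. *)

theory Defs
  imports "HOL-Probability.Probability" "HOL-Library.Landau_Symbols"
begin

definition xbar :: "(nat \<Rightarrow> 'a \<Rightarrow> real) \<Rightarrow> nat \<Rightarrow> 'a \<Rightarrow> real" where
  "xbar X n \<omega> = (\<Sum>i=1..n. X i \<omega>) / real n"

definition sampleS :: "(nat \<Rightarrow> 'a \<Rightarrow> real) \<Rightarrow> nat \<Rightarrow> 'a \<Rightarrow> real" where
  "sampleS X n \<omega> = sqrt ((\<Sum>i=1..n. (X i \<omega> - xbar X n \<omega>)\<^sup>2) / (real n - 1))"

definition stop_cond :: "(nat \<Rightarrow> 'a \<Rightarrow> real) \<Rightarrow> nat \<Rightarrow> nat \<Rightarrow> real \<Rightarrow> real \<Rightarrow> real \<Rightarrow> nat \<Rightarrow> 'a \<Rightarrow> bool" where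
  "stop_cond X m k \<rho> A c n \<omega> \<longleftrightarrow> real (m + k * n) \<ge> \<rho> * sampleS X (m + k * n) \<omega> * sqrt (A / c)"

text \<open>T = inf of stages at which stopping occurs (meaningful only when that set is nonempty).\<close>
definition stopT :: "(nat \<Rightarrow> 'a \<Rightarrow> real) \<Rightarrow> nat \<Rightarrow> nat \<Rightarrow> real \<Rightarrow> real \<Rightarrow> real \<Rightarrow> 'a \<Rightarrow> nat" where
  "stopT X m k \<rho> A c \<omega> = (LEAST n. stop_cond X m k \<rho> A c n \<omega>)"

definition strict_floor :: "real \<Rightarrow> int" where
  "strict_floor u = \<lceil>u\<rceil> - 1"

definition stopN :: "(nat \<Rightarrow> 'a \<Rightarrow> real) \<Rightarrow> nat \<Rightarrow> nat \<Rightarrow> real \<Rightarrow> real \<Rightarrow> real \<Rightarrow> 'a \<Rightarrow> int" where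
  "stopN X m k \<rho> A c \<omega> = strict_floor (real (m + k * stopT X m k \<rho> A c \<omega>) / \<rho>) + 1"

text \<open>The event {N <= eps n*}; if the stopping set is empty, T = N = infinity and the event fails.\<close>
definition early_event :: "'a measure \<Rightarrow> (nat \<Rightarrow> 'a \<Rightarrow> real) \<Rightarrow> nat \<Rightarrow> nat \<Rightarrow> real \<Rightarrow> real \<Rightarrow> real \<Rightarrow> real \<Rightarrow> real \<Rightarrow> 'a set" where
  "early_event M X m k \<rho> A c \<epsilon> nstar =
     {\<omega> \<in> space M. (\<exists>n. stop_cond X m k \<rho> A c n \<omega>) \<and> real_of_int (stopN X m k \<rho> A c \<omega>) \<le> \<epsilon> * nstar}"

end

theory Submission
  imports Defs
begin

(* On the event N <= eps n*, the stopping rule forces the sample standard deviation at the stopping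
   stage to be at most eps sigma, so the event lies in the union over j >= m of {S_j <= eps sigma}.
   With h = (1 - eps^2)/2, S_j <= eps sigma means that either the standardised sum of squares about mu
   is at most (1 - h) j, a chi-square lower tail that a Chernoff bound makes exponentially small in j,
   or the sum of the deviations from mu is of order sigma j, which Markov's inequality for the fourth
   moment makes O(1/j^2). Summing over j >= m gives O(1/m), and n* = O(m^r) turns this into
   O(n*^(-1/r)), i.e. gamma = 2. *)

lemma exp_neg_le_quadratic:
  fixes x :: real
  assumes "0 \<le> x"
  shows "exp (- x) \<le> 1 - x + x\<^sup>2 / 2"
proof -
  have nonneg: "0 \<le> 1 - x + x\<^sup>2 / 2"
    using zero_le_power2[of "x - 1"] by (simp add: power2_diff)
  have "0 \<le> x ^ 4"
    by simp
  then have "1 \<le> (1 + x + x\<^sup>2 / 2) * (1 - x + x\<^sup>2 / 2)"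
    by (simp add: algebra_simps power2_eq_square power4_eq_xxxx)
  also have "\<dots> \<le> exp x * (1 - x + x\<^sup>2 / 2)"
    by (rule mult_right_mono[OF exp_lower_Taylor_quadratic[OF assms] nonneg])
  finally show ?thesis
    by (simp add: exp_minus field_simps)
qed

lemma exp_neg_le_four_div_square:
  fixes b :: real
  assumes "0 < b"
  shows "exp (- b) \<le> 4 / b\<^sup>2"
proof -
  have "b / 2 \<le> exp (b / 2)"
    using exp_ge_add_one_self[of "b / 2"] by linarith
  then have "(b / 2)\<^sup>2 \<le> (exp (b / 2))\<^sup>2"
    using assms by (intro power_mono) auto
  also have "\<dots> = exp b"
    by (simp flip: exp_double)
  finally show ?thesis
    using assms by (simp add: exp_minus field_simps power_divide)
qed

lemma sum_sq_dev_mean: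
  fixes y :: "'i \<Rightarrow> real"
  assumes "finite J" "J \<noteq> {}"
  shows "(\<Sum>i\<in>J. (y i - (\<Sum>l\<in>J. y l) / card J)\<^sup>2)
           = (\<Sum>i\<in>J. (y i - a)\<^sup>2) - (\<Sum>i\<in>J. y i - a)\<^sup>2 / card J"
proof -
  define n where "n = real (card J)"
  define z where "z i = y i - a" for i
  define b where "b = sum z J / n"
  have n: "0 < n"
    using assms unfolding n_def by auto
  have "(\<Sum>l\<in>J. y l) / card J = a + b"
    using n unfolding b_def z_def n_def by (simp add: sum_subtractf field_simps)
  then have "(\<Sum>i\<in>J. (y i - (\<Sum>l\<in>J. y l) / card J)\<^sup>2) = (\<Sum>i\<in>J. (z i)\<^sup>2 - 2 * b * z i + b\<^sup>2)"
    unfolding z_def by (simp add: power2_eq_square algebra_simps)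
  also have "\<dots> = (\<Sum>i\<in>J. (z i)\<^sup>2) - 2 * b * sum z J + n * b\<^sup>2"
    unfolding n_def by (simp add: sum.distrib sum_subtractf sum_distrib_left)
  also have "\<dots> = (\<Sum>i\<in>J. (z i)\<^sup>2) - (sum z J)\<^sup>2 / n"
    using n unfolding b_def by (simp add: field_simps power2_eq_square)
  finally show ?thesis
    unfolding z_def n_def .
qed

lemma sum_sq_dev_mean_le_cases:
  fixes y :: "'i \<Rightarrow> real" and h v a :: real
  assumes J: "finite J" "J \<noteq> {}"
    and le: "(\<Sum>i\<in>J. (y i - (\<Sum>l\<in>J. y l) / card J)\<^sup>2) \<le> (1 - 2 * h) * v * card J"
  shows "(\<Sum>i\<in>J. (y i - a)\<^sup>2) \<le> (1 - h) * v * card J \<or> h * v * (real (card J))\<^sup>2 \<le> (\<Sum>i\<in>J. y i - a)\<^sup>2"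
proof (rule ccontr)
  have n: "0 < real (card J)"
    using J by auto
  assume "\<not> ?thesis"
  then have "(1 - h) * v * card J < (\<Sum>i\<in>J. (y i - a)\<^sup>2)"
    and "(\<Sum>i\<in>J. y i - a)\<^sup>2 / card J < h * v * card J"
    using n by (auto simp: field_simps power2_eq_square)
  moreover have "(1 - h) * v * card J - h * v * card J = (1 - 2 * h) * v * card J"
    by (simp add: algebra_simps)
  ultimately show False
    using le sum_sq_dev_mean[OF J, of y a] by linarith
qed

lemma (in prob_space) normal_distributed_central_moments:
  assumes s: "0 < \<sigma>" and D: "distributed M lborel Y (normal_density \<mu> \<sigma>)"
  shows "integrable M (\<lambda>\<omega>. (Y \<omega> - \<mu>) ^ n)"
    and "expectation (\<lambda>\<omega>. (Y \<omega> - \<mu>)\<^sup>2) = \<sigma>\<^sup>2"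
    and "expectation (\<lambda>\<omega>. (Y \<omega> - \<mu>) ^ 4) = 3 * \<sigma> ^ 4"
proof -
  show "integrable M (\<lambda>\<omega>. (Y \<omega> - \<mu>) ^ n)"
    using distributed_integrable[OF D, of "\<lambda>x. (x - \<mu>) ^ n"] integrable_normal_moment[OF s] by simp
  have even_moment: "expectation (\<lambda>\<omega>. (Y \<omega> - \<mu>) ^ (2 * k)) = fact (2 * k) / ((2 / \<sigma>\<^sup>2) ^ k * fact k)" for k
    using distributed_integral[OF D, of "\<lambda>x. (x - \<mu>) ^ (2 * k)"] integral_normal_moment_even[OF s] by simp
  show "expectation (\<lambda>\<omega>. (Y \<omega> - \<mu>)\<^sup>2) = \<sigma>\<^sup>2"
    using even_moment[of 1] by simp
  show "expectation (\<lambda>\<omega>. (Y \<omega> - \<mu>) ^ 4) = 3 * \<sigma> ^ 4"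
    using even_moment[of 2] s by (simp add: fact_numeral power_divide field_simps)
qed

lemma (in prob_space) expectation_exp_neg_normal_square_le:
  assumes s: "0 < \<sigma>" and D: "distributed M lborel Y (normal_density \<mu> \<sigma>)" and t: "0 \<le> t"
  shows "expectation (\<lambda>\<omega>. exp (- t * ((Y \<omega> - \<mu>) / \<sigma>)\<^sup>2)) \<le> 1 - t + 3 * t\<^sup>2 / 2"
proof -
  have [measurable]: "Y \<in> borel_measurable M"
    using distributed_measurable[OF D] by simp
  note moments = normal_distributed_central_moments[OF s D]
  let ?p = "\<lambda>\<omega>. 1 - t / \<sigma>\<^sup>2 * (Y \<omega> - \<mu>)\<^sup>2 + t\<^sup>2 / (2 * \<sigma> ^ 4) * (Y \<omega> - \<mu>) ^ 4"
  have "expectation (\<lambda>\<omega>. exp (- t * ((Y \<omega> - \<mu>) / \<sigma>)\<^sup>2)) \<le> expectation ?p"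
  proof (rule integral_mono)
    show "integrable M (\<lambda>\<omega>. exp (- t * ((Y \<omega> - \<mu>) / \<sigma>)\<^sup>2))"
      by (rule integrable_const_bound[where B = 1]) (use t in auto)
    show "integrable M ?p"
      using moments(1) by auto
    show "exp (- t * ((Y \<omega> - \<mu>) / \<sigma>)\<^sup>2) \<le> ?p \<omega>" for \<omega>
    proof -
      have "exp (- t * ((Y \<omega> - \<mu>) / \<sigma>)\<^sup>2)
          \<le> 1 - t * ((Y \<omega> - \<mu>) / \<sigma>)\<^sup>2 + (t * ((Y \<omega> - \<mu>) / \<sigma>)\<^sup>2)\<^sup>2 / 2"
        using exp_neg_le_quadratic[of "t * ((Y \<omega> - \<mu>) / \<sigma>)\<^sup>2"] t by simp
      also have "\<dots> = ?p \<omega>"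
        using s by (simp add: power_divide power_mult_distrib flip: power_mult)
      finally show ?thesis .
    qed
  qed
  also have "\<dots> = 1 - t / \<sigma>\<^sup>2 * \<sigma>\<^sup>2 + t\<^sup>2 / (2 * \<sigma> ^ 4) * (3 * \<sigma> ^ 4)"
    using moments by (simp add: prob_space)
  also have "\<dots> = 1 - t + 3 * t\<^sup>2 / 2"
    using s by simp
  finally show ?thesis .
qed

lemma (in prob_space) expectation_exp_neg_chi_square_le:
  fixes t :: real
  assumes indep: "indep_vars (\<lambda>_. borel) X J"
    and D: "\<And>i. i \<in> J \<Longrightarrow> distributed M lborel (X i) (normal_density \<mu> \<sigma>)"
    and J: "finite J" and s: "0 < \<sigma>" and t: "0 \<le> t"
  shows "expectation (\<lambda>\<omega>. exp (- t * (\<Sum>i\<in>J. ((X i \<omega> - \<mu>) / \<sigma>)\<^sup>2)))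
           \<le> exp (card J * (- t + 3 * t\<^sup>2 / 2))"
proof -
  define Z where "Z i \<omega> = exp (- t * ((X i \<omega> - \<mu>) / \<sigma>)\<^sup>2)" for i \<omega>
  have Xm: "X i \<in> borel_measurable M" if "i \<in> J" for i
    using distributed_measurable[OF D[OF that]] by simp
  have Zint: "integrable M (Z i)" if "i \<in> J" for i
    using Xm[OF that] t unfolding Z_def by (intro integrable_const_bound[where B = 1]) auto
  have indZ: "indep_vars (\<lambda>_. borel) Z J"
    unfolding Z_def by (rule indep_vars_compose2[OF indep]) measurable
  have EZ: "expectation (Z i) \<le> exp (- t + 3 * t\<^sup>2 / 2)" if "i \<in> J" for i
  proof -
    have "expectation (Z i) \<le> 1 - t + 3 * t\<^sup>2 / 2"
      using expectation_exp_neg_normal_square_le[OF s D[OF that] t] unfolding Z_def by simp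
    also have "\<dots> \<le> exp (- t + 3 * t\<^sup>2 / 2)"
      using exp_ge_add_one_self[of "- t + 3 * t\<^sup>2 / 2"] by linarith
    finally show ?thesis .
  qed
  have "expectation (\<lambda>\<omega>. exp (- t * (\<Sum>i\<in>J. ((X i \<omega> - \<mu>) / \<sigma>)\<^sup>2)))
      = expectation (\<lambda>\<omega>. \<Prod>i\<in>J. Z i \<omega>)"
    unfolding Z_def by (simp add: sum_distrib_left exp_sum[OF J])
  also have "\<dots> = (\<Prod>i\<in>J. expectation (Z i))"
    by (rule indep_vars_lebesgue_integral[OF J indZ Zint])
  also have "\<dots> \<le> (\<Prod>i\<in>J. exp (- t + 3 * t\<^sup>2 / 2))"
    by (intro prod_mono conjI EZ integral_nonneg_AE) (auto simp: Z_def)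
  also have "\<dots> = exp (card J * (- t + 3 * t\<^sup>2 / 2))"
    by (simp add: exp_of_nat_mult)
  finally show ?thesis .
qed

lemma (in prob_space) chi_square_lower_tail:
  fixes h :: real
  assumes indep: "indep_vars (\<lambda>_. borel) X J"
    and D: "\<And>i. i \<in> J \<Longrightarrow> distributed M lborel (X i) (normal_density \<mu> \<sigma>)"
    and J: "finite J" and s: "0 < \<sigma>" and h: "0 < h"
  shows "prob {\<omega>\<in>space M. (\<Sum>i\<in>J. ((X i \<omega> - \<mu>) / \<sigma>)\<^sup>2) \<le> (1 - h) * card J}
           \<le> exp (- h\<^sup>2 * card J / 6)"
proof -
  \<comment> \<open>This choice of t minimises the resulting exponent t (1 - h) - t + 3 t^2/2.\<close>
  define t where "t = h / 3"
  define V where "V \<omega> = (\<Sum>i\<in>J. ((X i \<omega> - \<mu>) / \<sigma>)\<^sup>2)" for \<omega>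
  have t: "0 < t"
    using h unfolding t_def by simp
  have "X i \<in> borel_measurable M" if "i \<in> J" for i
    using distributed_measurable[OF D[OF that]] by simp
  then have [measurable]: "V \<in> borel_measurable M"
    unfolding V_def by measurable
  have "V \<omega> \<ge> 0" for \<omega>
    unfolding V_def by (simp add: sum_nonneg)
  then have int: "integrable M (\<lambda>\<omega>. exp (- t * V \<omega>))"
    using t by (intro integrable_const_bound[where B = 1]) auto
  then have set_int: "set_integrable M (space M) (\<lambda>\<omega>. exp (- t * V \<omega>))"
    unfolding set_integrable_def by (intro integrable_mult_indicator) auto
  have "prob {\<omega>\<in>space M. V \<omega> \<le> (1 - h) * card J}
      \<le> exp (t * ((1 - h) * card J)) * expectation (\<lambda>\<omega>. exp (- t * V \<omega>))"
    using Chernoff_ineq_le[OF t set_int] set_integral_space[OF int] by simp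
  also have "\<dots> \<le> exp (t * ((1 - h) * card J)) * exp (card J * (- t + 3 * t\<^sup>2 / 2))"
    using expectation_exp_neg_chi_square_le[OF indep D J s] t unfolding V_def by simp
  also have "\<dots> = exp (- h\<^sup>2 * card J / 6)"
    unfolding t_def by (simp flip: exp_add) (simp add: field_simps power2_eq_square)
  finally show ?thesis
    unfolding V_def .
qed

lemma (in prob_space) normal_sum_deviation_tail:
  fixes a :: real
  assumes indep: "indep_vars (\<lambda>_. borel) X J"
    and D: "\<And>i. i \<in> J \<Longrightarrow> distributed M lborel (X i) (normal_density \<mu> \<sigma>)"
    and J: "finite J" "J \<noteq> {}" and s: "0 < \<sigma>" and a: "0 < a"
  shows "prob {\<omega>\<in>space M. a * (card J)\<^sup>2 \<le> (\<Sum>i\<in>J. X i \<omega> - \<mu>)\<^sup>2} \<le> 3 * \<sigma> ^ 4 / (a\<^sup>2 * (card J)\<^sup>2)"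
proof -
  define n where "n = real (card J)"
  define S where "S \<omega> = (\<Sum>i\<in>J. X i \<omega>)" for \<omega>
  have n: "0 < n"
    unfolding n_def using J by auto
  have Xm: "X i \<in> borel_measurable M" if "i \<in> J" for i
    using distributed_measurable[OF D[OF that]] by simp
  have [measurable]: "S \<in> borel_measurable M"
    unfolding S_def using Xm by measurable
  have "distributed M lborel S (normal_density (\<Sum>i\<in>J. \<mu>) (sqrt (\<Sum>i\<in>J. \<sigma>\<^sup>2)))"
    unfolding S_def by (rule sum_indep_normal[OF J indep s D])
  then have DS: "distributed M lborel S (normal_density (n * \<mu>) (sqrt n * \<sigma>))"
    using s by (simp add: n_def real_sqrt_mult)
  have s': "0 < sqrt n * \<sigma>"
    using n s by simp
  note moments = normal_distributed_central_moments[OF s' DS]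
  have "{\<omega>\<in>space M. a * (card J)\<^sup>2 \<le> (\<Sum>i\<in>J. X i \<omega> - \<mu>)\<^sup>2}
      \<subseteq> {\<omega>\<in>space M. (a * n\<^sup>2)\<^sup>2 \<le> (S \<omega> - n * \<mu>) ^ 4}"
  proof safe
    fix \<omega> assume "a * (card J)\<^sup>2 \<le> (\<Sum>i\<in>J. X i \<omega> - \<mu>)\<^sup>2"
    then have "a * n\<^sup>2 \<le> (S \<omega> - n * \<mu>)\<^sup>2"
      unfolding S_def n_def by (simp add: sum_subtractf)
    then have "(a * n\<^sup>2)\<^sup>2 \<le> ((S \<omega> - n * \<mu>)\<^sup>2)\<^sup>2"
      using a by (intro power_mono) auto
    then show "(a * n\<^sup>2)\<^sup>2 \<le> (S \<omega> - n * \<mu>) ^ 4"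
      by simp
  qed
  then have "prob {\<omega>\<in>space M. a * (card J)\<^sup>2 \<le> (\<Sum>i\<in>J. X i \<omega> - \<mu>)\<^sup>2}
      \<le> prob {\<omega>\<in>space M. (a * n\<^sup>2)\<^sup>2 \<le> (S \<omega> - n * \<mu>) ^ 4}"
    by (intro finite_measure_mono) measurable
  also have "\<dots> \<le> expectation (\<lambda>\<omega>. (S \<omega> - n * \<mu>) ^ 4) / (a * n\<^sup>2)\<^sup>2"
    using a n by (intro integral_Markov_inequality_measure[OF moments(1)]) auto
  also have "\<dots> = 3 * n\<^sup>2 * \<sigma> ^ 4 / (a * n\<^sup>2)\<^sup>2"
  proof -
    have "(sqrt n) ^ 4 = n\<^sup>2"
      using n power_mult[of "sqrt n" 2 2] by simp
    then show ?thesis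
      using moments(3) by (simp add: power_mult_distrib)
  qed
  also have "\<dots> = 3 * \<sigma> ^ 4 / (a\<^sup>2 * (card J)\<^sup>2)"
    using n a unfolding n_def by (simp add: field_simps power2_eq_square)
  finally show ?thesis .
qed

lemma sampleS_le_cases:
  fixes \<sigma> \<epsilon> h :: real
  assumes le: "sampleS X j \<omega> \<le> \<epsilon> * \<sigma>" and h: "2 * h = 1 - \<epsilon>\<^sup>2" and s: "0 < \<sigma>" and j: "2 \<le> j"
  shows "(\<Sum>i\<in>{1..j}. ((X i \<omega> - \<mu>) / \<sigma>)\<^sup>2) \<le> (1 - h) * j
           \<or> h * \<sigma>\<^sup>2 * (real j)\<^sup>2 \<le> (\<Sum>i\<in>{1..j}. X i \<omega> - \<mu>)\<^sup>2"
proof -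
  have J: "finite {1..j}" "{1..j} \<noteq> {}" "card {1..j} = j"
    using j by auto
  define Q where "Q = (\<Sum>i=1..j. (X i \<omega> - xbar X j \<omega>)\<^sup>2)"
  have "Q / (real j - 1) \<le> \<epsilon>\<^sup>2 * \<sigma>\<^sup>2"
    using sqrt_le_D[OF le[unfolded sampleS_def]] unfolding Q_def by (simp add: power_mult_distrib)
  then have "Q \<le> \<epsilon>\<^sup>2 * \<sigma>\<^sup>2 * (real j - 1)"
    using j by (simp add: pos_divide_le_eq)
  also have "\<dots> \<le> \<epsilon>\<^sup>2 * \<sigma>\<^sup>2 * j"
    by (simp add: mult_left_mono)
  also have "\<dots> = (1 - 2 * h) * \<sigma>\<^sup>2 * card {1..j}"
    unfolding h J(3) by simp
  finally have "(\<Sum>i\<in>{1..j}. (X i \<omega> - (\<Sum>l\<in>{1..j}. X l \<omega>) / card {1..j})\<^sup>2)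
      \<le> (1 - 2 * h) * \<sigma>\<^sup>2 * card {1..j}"
    unfolding Q_def xbar_def J(3) .
  then have "(\<Sum>i\<in>{1..j}. (X i \<omega> - \<mu>)\<^sup>2) \<le> (1 - h) * \<sigma>\<^sup>2 * card {1..j}
      \<or> h * \<sigma>\<^sup>2 * (real (card {1..j}))\<^sup>2 \<le> (\<Sum>i\<in>{1..j}. X i \<omega> - \<mu>)\<^sup>2"
    by (rule sum_sq_dev_mean_le_cases[OF J(1,2)])
  moreover have "(\<Sum>i\<in>{1..j}. ((X i \<omega> - \<mu>) / \<sigma>)\<^sup>2) \<le> (1 - h) * j"
    if "(\<Sum>i\<in>{1..j}. (X i \<omega> - \<mu>)\<^sup>2) \<le> (1 - h) * \<sigma>\<^sup>2 * j"
    using that s by (simp add: power_divide flip: sum_divide_distrib)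
      (simp add: pos_divide_le_eq mult.commute mult.left_commute)
  ultimately show ?thesis
    unfolding J(3) by blast
qed

lemma (in prob_space) prob_sampleS_le:
  fixes \<epsilon> :: real
  assumes indep: "indep_vars (\<lambda>_. borel) X {1..j}"
    and D: "\<And>i. i \<in> {1..j} \<Longrightarrow> distributed M lborel (X i) (normal_density \<mu> \<sigma>)"
    and s: "0 < \<sigma>" and \<epsilon>: "0 < \<epsilon>" "\<epsilon> < 1" and j: "2 \<le> j"
  shows "prob {\<omega>\<in>space M. sampleS X j \<omega> \<le> \<epsilon> * \<sigma>}
           \<le> (2304 / (1 - \<epsilon>\<^sup>2) ^ 4 + 12 / (1 - \<epsilon>\<^sup>2)\<^sup>2) / (real j)\<^sup>2"
proof -
  define h where "h = (1 - \<epsilon>\<^sup>2) / 2"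
  have h: "0 < h"
    using \<epsilon> unfolding h_def by (simp add: power_less_one_iff)
  have Xm: "X i \<in> borel_measurable M" if "i \<in> {1..j}" for i
    using distributed_measurable[OF D[OF that]] by simp
  have J: "finite {1..j}" "{1..j} \<noteq> {}" "card {1..j} = j"
    using j by auto
  define E1 where "E1 = {\<omega>\<in>space M. (\<Sum>i\<in>{1..j}. ((X i \<omega> - \<mu>) / \<sigma>)\<^sup>2) \<le> (1 - h) * j}"
  define E2 where "E2 = {\<omega>\<in>space M. h * \<sigma>\<^sup>2 * (real j)\<^sup>2 \<le> (\<Sum>i\<in>{1..j}. X i \<omega> - \<mu>)\<^sup>2}"
  have E: "E1 \<in> events" "E2 \<in> events"
    unfolding E1_def E2_def by (intro borel_measurable_le; use Xm in measurable)+
  have "{\<omega>\<in>space M. sampleS X j \<omega> \<le> \<epsilon> * \<sigma>} \<subseteq> E1 \<union> E2"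
    using sampleS_le_cases[of X j _ \<epsilon> \<sigma> h \<mu>] s j unfolding E1_def E2_def h_def by auto
  then have "prob {\<omega>\<in>space M. sampleS X j \<omega> \<le> \<epsilon> * \<sigma>} \<le> prob (E1 \<union> E2)"
    using E by (intro finite_measure_mono) auto
  also have "\<dots> \<le> prob E1 + prob E2"
    using E by (rule measure_Un_le)
  also have "prob E1 \<le> 144 / h ^ 4 / (real j)\<^sup>2"
  proof -
    have "prob E1 \<le> exp (- (h\<^sup>2 * j / 6))"
      using chi_square_lower_tail[OF indep D J(1) s h] unfolding E1_def J(3) by simp
    also have "\<dots> \<le> 4 / (h\<^sup>2 * j / 6)\<^sup>2"
      using h j by (intro exp_neg_le_four_div_square) simp
    also have "\<dots> = 144 / h ^ 4 / (real j)\<^sup>2"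
      by (simp add: power_mult_distrib power_divide flip: power_mult)
    finally show ?thesis .
  qed
  also have "prob E2 \<le> 3 / h\<^sup>2 / (real j)\<^sup>2"
  proof -
    have "prob E2 \<le> 3 * \<sigma> ^ 4 / ((h * \<sigma>\<^sup>2)\<^sup>2 * (real j)\<^sup>2)"
      using normal_sum_deviation_tail[OF indep D J(1,2) s, of "h * \<sigma>\<^sup>2"] h s
      unfolding E2_def J(3) by simp
    also have "\<dots> = 3 / h\<^sup>2 / (real j)\<^sup>2"
      using s by (simp add: power_mult_distrib flip: power_mult)
    finally show ?thesis .
  qed
  also have "144 / h ^ 4 / (real j)\<^sup>2 + 3 / h\<^sup>2 / (real j)\<^sup>2
      = (2304 / (1 - \<epsilon>\<^sup>2) ^ 4 + 12 / (1 - \<epsilon>\<^sup>2)\<^sup>2) / (real j)\<^sup>2"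
    unfolding h_def by (simp add: power_divide add_divide_distrib)
  finally show ?thesis
    by simp
qed

lemma inverse_consecutive_products_sums:
  assumes m: "2 \<le> m"
  shows "(\<lambda>i. 1 / (real (m + i) * (real (m + i) - 1))) sums (1 / (real m - 1))"
proof -
  define f where "f i = 1 / (real (m + i) - 1)" for i
  have "filterlim (\<lambda>i. (real m - 1) + real i) at_top sequentially"
    by (rule filterlim_tendsto_add_at_top[OF tendsto_const filterlim_real_sequentially])
  then have "f \<longlonglongrightarrow> 0"
    unfolding f_def by (intro tendsto_divide_0[OF tendsto_const] filterlim_at_top_imp_at_infinity)
      (simp add: algebra_simps)
  moreover have "f i - f (Suc i) = 1 / (real (m + i) * (real (m + i) - 1))" for i
    using m unfolding f_def by (simp add: field_simps)
  ultimately show ?thesis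
    using telescope_sums'[of f 0] by (simp add: f_def)
qed

lemma (in prob_space) prob_UN_atLeast_le_inverse_square:
  assumes B: "\<And>j. m \<le> j \<Longrightarrow> B j \<in> events"
    and le: "\<And>j. m \<le> j \<Longrightarrow> prob (B j) \<le> K / (real j)\<^sup>2" and m: "2 \<le> m"
  shows "prob (\<Union>j\<in>{m..}. B j) \<le> K / (real m - 1)"
proof -
  have "0 \<le> K / (real m)\<^sup>2"
    using le[of m] measure_nonneg[of M "B m"] m by linarith
  then have "0 \<le> K"
    using m by (simp add: zero_le_divide_iff)
  then have bound: "prob (B (m + i)) \<le> K * (1 / (real (m + i) * (real (m + i) - 1)))" for i
    using le[of "m + i"] m by (auto intro: order.trans simp: power2_eq_square divide_left_mono)
  have sums: "(\<lambda>i. K * (1 / (real (m + i) * (real (m + i) - 1)))) sums (K * (1 / (real m - 1)))"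
    by (rule sums_mult[OF inverse_consecutive_products_sums[OF m]])
  have summable: "summable (\<lambda>i. prob (B (m + i)))"
    by (rule summable_comparison_test'[OF sums_summable[OF sums], of 0]) (use bound in auto)
  have "(\<Union>j\<in>{m..}. B j) = (\<Union>i. B (m + i))"
  proof (intro equalityI subsetI)
    fix x assume "x \<in> (\<Union>j\<in>{m..}. B j)"
    then obtain j where "m \<le> j" "x \<in> B j"
      by auto
    then show "x \<in> (\<Union>i. B (m + i))"
      by (intro UN_I[of "j - m"]) auto
  qed auto
  also have "prob \<dots> \<le> (\<Sum>i. prob (B (m + i)))"
    using B summable by (intro finite_measure_subadditive_countably) auto
  also have "\<dots> \<le> K * (1 / (real m - 1))"
    using suminf_le[OF bound summable sums_summable[OF sums]] sums by (simp add: sums_iff)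
  finally show ?thesis
    by simp
qed

lemma early_event_subset_sampleS_le:
  assumes "0 < A" "0 < c" "0 < \<rho>"
  shows "early_event M X m k \<rho> A c \<epsilon> (\<sigma> * sqrt (A / c))
           \<subseteq> (\<Union>j\<in>{m..}. {\<omega>\<in>space M. sampleS X j \<omega> \<le> \<epsilon> * \<sigma>})"
proof
  fix \<omega> assume \<omega>: "\<omega> \<in> early_event M X m k \<rho> A c \<epsilon> (\<sigma> * sqrt (A / c))"
  define q where "q = sqrt (A / c)"
  define T where "T = stopT X m k \<rho> A c \<omega>"
  have q: "0 < q"
    using assms unfolding q_def by simp
  have stops: "\<exists>n. stop_cond X m k \<rho> A c n \<omega>" and space: "\<omega> \<in> space M"
    and N: "real_of_int (stopN X m k \<rho> A c \<omega>) \<le> \<epsilon> * (\<sigma> * q)"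
    using \<omega> unfolding early_event_def q_def by auto
  have "stop_cond X m k \<rho> A c T \<omega>"
    unfolding T_def stopT_def by (rule LeastI_ex[OF stops])
  then have "\<rho> * sampleS X (m + k * T) \<omega> * q \<le> real (m + k * T)"
    unfolding stop_cond_def q_def by simp
  also have "real (m + k * T) \<le> \<rho> * stopN X m k \<rho> A c \<omega>"
  proof -
    have "real (m + k * T) / \<rho> \<le> stopN X m k \<rho> A c \<omega>"
      unfolding stopN_def strict_floor_def T_def by (simp add: le_of_int_ceiling)
    then show ?thesis
      using assms by (simp add: pos_divide_le_eq mult.commute)
  qed
  also have "\<dots> \<le> \<rho> * (\<epsilon> * \<sigma>) * q"
    using N assms by simp
  finally have "sampleS X (m + k * T) \<omega> \<le> \<epsilon> * \<sigma>"
    using assms q by (simp add: mult.commute mult.left_commute)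
  then show "\<omega> \<in> (\<Union>j\<in>{m..}. {\<omega>\<in>space M. sampleS X j \<omega> \<le> \<epsilon> * \<sigma>})"
    using space by auto
qed

lemma inverse_bigo_powr_inverse:
  fixes f g :: "'a \<Rightarrow> real"
  assumes "f \<in> O[F](\<lambda>x. g x powr r)" "0 < r" "\<And>x. 0 < f x" "\<And>x. 0 < g x"
  shows "(\<lambda>x. 1 / g x) \<in> O[F](\<lambda>x. f x powr (- 1 / r))"
proof -
  have "(\<lambda>x. f x powr (1 / r)) \<in> O[F](\<lambda>x. (g x powr r) powr (1 / r))"
    using assms by (intro bigo_powr_nonneg) (auto intro: less_imp_le always_eventually)
  also have "(\<lambda>x. (g x powr r) powr (1 / r)) = g"
    using assms by (simp add: powr_powr abs_of_pos)
  finally have "(\<lambda>x. f x powr (1 / r)) \<in> O[F](g)" .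
  moreover have "f x \<noteq> 0" "g x \<noteq> 0" for x
    using assms(3,4)[of x] by auto
  ultimately have "(\<lambda>x. inverse (g x)) \<in> O[F](\<lambda>x. inverse (f x powr (1 / r)))"
    by (intro landau_o.big.inverse) simp_all
  then show ?thesis
    by (simp add: powr_minus divide_inverse)
qed

lemma (in prob_space) prob_early_event_le:
  fixes \<epsilon> :: real
  assumes indep: "indep_vars (\<lambda>_. borel) X UNIV"
    and D: "\<And>i. distributed M lborel (X i) (normal_density \<mu> \<sigma>)"
    and "0 < \<sigma>" "0 < A" "0 < c" "0 < \<rho>" "0 < \<epsilon>" "\<epsilon> < 1" "2 \<le> m"
  shows "prob (early_event M X m k \<rho> A c \<epsilon> (\<sigma> * sqrt (A / c)))
           \<le> (2304 / (1 - \<epsilon>\<^sup>2) ^ 4 + 12 / (1 - \<epsilon>\<^sup>2)\<^sup>2) / (real m - 1)"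
proof -
  have [measurable]: "X i \<in> borel_measurable M" for i
    using distributed_measurable[OF D] by simp
  have "prob (early_event M X m k \<rho> A c \<epsilon> (\<sigma> * sqrt (A / c)))
      \<le> prob (\<Union>j\<in>{m..}. {\<omega>\<in>space M. sampleS X j \<omega> \<le> \<epsilon> * \<sigma>})"
  proof (rule finite_measure_mono)
    show "early_event M X m k \<rho> A c \<epsilon> (\<sigma> * sqrt (A / c))
        \<subseteq> (\<Union>j\<in>{m..}. {\<omega>\<in>space M. sampleS X j \<omega> \<le> \<epsilon> * \<sigma>})"
      using assms by (intro early_event_subset_sampleS_le)
    show "(\<Union>j\<in>{m..}. {\<omega>\<in>space M. sampleS X j \<omega> \<le> \<epsilon> * \<sigma>}) \<in> events"
      unfolding sampleS_def xbar_def by measurable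
  qed
  also have "\<dots> \<le> (2304 / (1 - \<epsilon>\<^sup>2) ^ 4 + 12 / (1 - \<epsilon>\<^sup>2)\<^sup>2) / (real m - 1)"
    using assms
    by (intro prob_UN_atLeast_le_inverse_square prob_sampleS_le indep_vars_subset[OF indep])
      (auto simp: sampleS_def xbar_def)
  finally show ?thesis .
qed

theorem lemma5p1:
  fixes M :: "'a measure" and X :: "nat \<Rightarrow> 'a \<Rightarrow> real"
    and \<mu> \<sigma> A \<rho> r :: real and k :: nat
  assumes "prob_space M"
    and "prob_space.indep_vars M (\<lambda>_. borel) X UNIV"
    and "\<And>i. distributed M lborel (X i) (\<lambda>x. ennreal (normal_density \<mu> \<sigma> x))"
    and "\<sigma> > 0" and "A > 0" and "k \<ge> 1" and "0 < \<rho>" and "\<rho> \<le> 1" and "r > 1"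
  shows "\<forall>\<epsilon>. 0 < \<epsilon> \<and> \<epsilon> < 1 \<longrightarrow> (\<exists>\<gamma>\<ge>2. \<forall>(m0 :: nat \<Rightarrow> nat) (c :: nat \<Rightarrow> real).
      (let m = (\<lambda>j. m0 j * k + 1); nstar = (\<lambda>j. \<sigma> * sqrt (A / c j)) in
        filterlim m0 at_top sequentially
        \<and> (\<forall>j. c j > 0)
        \<and> c \<in> O(\<lambda>j. real (m j) powr (- 2 * r))
        \<and> nstar \<in> O(\<lambda>j. real (m j) powr r)
        \<and> limsup (\<lambda>j. ereal (real (m j) / nstar j)) < ereal \<rho>
        \<longrightarrow> (\<lambda>j. measure M (early_event M X (m j) k \<rho> A (c j) \<epsilon> (nstar j)))
              \<in> O(\<lambda>j. nstar j powr (- \<gamma> / (2 * r)))))"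
proof (intro allI impI, rule exI[of _ "2::real"], rule conjI, simp, intro allI,
    unfold Let_def, intro impI, elim conjE)
  fix \<epsilon> :: real and m0 :: "nat \<Rightarrow> nat" and c :: "nat \<Rightarrow> real"
  assume \<epsilon>: "0 < \<epsilon>" "\<epsilon> < 1" and m0: "filterlim m0 at_top sequentially" and c: "\<forall>j. 0 < c j"
    and nstar: "(\<lambda>j. \<sigma> * sqrt (A / c j)) \<in> O(\<lambda>j. real (m0 j * k + 1) powr r)"
  interpret prob_space M by fact
  define K where "K = 2304 / (1 - \<epsilon>\<^sup>2) ^ 4 + 12 / (1 - \<epsilon>\<^sup>2)\<^sup>2"
  have halve: "K / (x - 1) \<le> K / (x / 2)" if "2 \<le> x" for x :: real
    using that unfolding K_def by (intro divide_left_mono) auto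
  have "eventually (\<lambda>j. 1 \<le> m0 j) sequentially"
    using m0 by (simp add: filterlim_at_top)
  then have "(\<lambda>j. prob (early_event M X (m0 j * k + 1) k \<rho> A (c j) \<epsilon> (\<sigma> * sqrt (A / c j))))
      \<in> O(\<lambda>j. 1 / real (m0 j * k + 1))"
  proof (intro bigoI[where c = "2 * K"], elim eventually_mono)
    fix j
    assume "1 \<le> m0 j"
    then have m: "2 \<le> m0 j * k + 1"
      using assms(6) by (simp add: Suc_le_eq)
    have "prob (early_event M X (m0 j * k + 1) k \<rho> A (c j) \<epsilon> (\<sigma> * sqrt (A / c j)))
        \<le> K / (real (m0 j * k + 1) - 1)"
      unfolding K_def using assms \<epsilon> c m by (intro prob_early_event_le) auto
    also have "\<dots> \<le> K / (real (m0 j * k + 1) / 2)"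
      using m by (intro halve) linarith
    finally show "norm (prob (early_event M X (m0 j * k + 1) k \<rho> A (c j) \<epsilon> (\<sigma> * sqrt (A / c j))))
        \<le> 2 * K * norm (1 / real (m0 j * k + 1))"
      by (simp add: mult.commute)
  qed
  also have "(\<lambda>j. 1 / real (m0 j * k + 1)) \<in> O(\<lambda>j. (\<sigma> * sqrt (A / c j)) powr (- 1 / r))"
    using assms c by (intro inverse_bigo_powr_inverse[OF nstar]) (auto simp: add_pos_nonneg)
  finally show "(\<lambda>j. prob (early_event M X (m0 j * k + 1) k \<rho> A (c j) \<epsilon> (\<sigma> * sqrt (A / c j))))
      \<in> O(\<lambda>j. (\<sigma> * sqrt (A / c j)) powr (- 2 / (2 * r)))"
    by simp
qed

end
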